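(* Let $G$ be a graph of order $n$ with at least one edge. Then $\gamma^{DLD}(G)=n-1$ if and only if $G$ is a threshold graph.
   Context: All graphs are finite, simple and undirected (not necessarily connected). For $u\in V$, $N(u)$ is the set of neighbours of $u$ and $N[u]=N(u)\cup\{u\}$. A code is a non-empty subset $C\subseteq V$; $I(C;u)=N[u]\cap C$. A code $C$ is solid-locating-dominating if $I(C;u)\ne\emptyset$ for every $u\in V\setminus C$ and $I(C;u)\not\subseteq I(C;v)$ for all distinct $u,v\in V\setminus C$; $\gamma^{DLD}(G)$ is the minimum size of such a code. A threshold graph is a graph that can be built from the empty graph by repeatedly adding either an isolated vertex or a vertex adjacent to all existing vertices; equivalently, a graph in which for every two vertices $x,y$ we have $N(x)\subseteq N[y]$ or $N(y)\subseteq N[x]$. *)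

theory Defs
  imports Main
begin

definition simple_graph :: "'a set \<Rightarrow> ('a \<Rightarrow> 'a \<Rightarrow> bool) \<Rightarrow> bool" where
  "simple_graph V E \<longleftrightarrow> finite V \<and> (\<forall>x y. E x y \<longrightarrow> E y x)
     \<and> (\<forall>x. \<not> E x x) \<and> (\<forall>x y. E x y \<longrightarrow> x \<in> V \<and> y \<in> V)"

definition open_nbhd :: "'a set \<Rightarrow> ('a \<Rightarrow> 'a \<Rightarrow> bool) \<Rightarrow> 'a \<Rightarrow> 'a set" where
  "open_nbhd V E u = {v \<in> V. E u v}"

definition closed_nbhd :: "'a set \<Rightarrow> ('a \<Rightarrow> 'a \<Rightarrow> bool) \<Rightarrow> 'a \<Rightarrow> 'a set" where
  "closed_nbhd V E u = insert u (open_nbhd V E u)"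

definition I_set :: "'a set \<Rightarrow> ('a \<Rightarrow> 'a \<Rightarrow> bool) \<Rightarrow> 'a set \<Rightarrow> 'a \<Rightarrow> 'a set" where
  "I_set V E C u = closed_nbhd V E u \<inter> C"

definition is_DLD_code :: "'a set \<Rightarrow> ('a \<Rightarrow> 'a \<Rightarrow> bool) \<Rightarrow> 'a set \<Rightarrow> bool" where
  "is_DLD_code V E C \<longleftrightarrow> C \<noteq> {} \<and> C \<subseteq> V
     \<and> (\<forall>u \<in> V - C. I_set V E C u \<noteq> {})
     \<and> (\<forall>u \<in> V - C. \<forall>v \<in> V - C. u \<noteq> v \<longrightarrow> \<not> (I_set V E C u \<subseteq> I_set V E C v))"

definition gamma_DLD :: "'a set \<Rightarrow> ('a \<Rightarrow> 'a \<Rightarrow> bool) \<Rightarrow> nat" where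
  "gamma_DLD V E = Min {card C | C. is_DLD_code V E C}"

inductive threshold :: "'a set \<Rightarrow> ('a \<Rightarrow> 'a \<Rightarrow> bool) \<Rightarrow> bool" where
  empty: "threshold {} (\<lambda>_ _. False)"
| add_isolated: "threshold V E \<Longrightarrow> v \<notin> V \<Longrightarrow> threshold (insert v V) E"
| add_dominating: "threshold V E \<Longrightarrow> v \<notin> V \<Longrightarrow>
    threshold (insert v V) (\<lambda>x y. E x y \<or> (x = v \<and> y \<in> V) \<or> (y = v \<and> x \<in> V))"

end

(*
  Both sides are equivalent to the neighbourhoods being nested: for all x, y,
  N(x) \<subseteq> N[y] or N(y) \<subseteq> N[x].  If two vertices u, v outside a code C had
  N(u) \<subseteq> N[v], then I(C;u) \<subseteq> I(C;v) (as u \<notin> C), so nested neighbourhoods force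
  |V - C| \<le> 1; conversely, for an incomparable pair u, v the set V - {u, v} is a
  code.  Threshold graphs are nested by construction, and a nested graph has a
  vertex that is isolated or dominating: if a vertex u of maximum degree does not
  dominate, maximality gives N(x) \<subseteq> N[u] for every x, so any non-neighbour of u
  is isolated.  Deleting that vertex and inducting rebuilds the graph.
*)
theory Submission
  imports Defs
begin

definition nested_nbhds :: "'a set \<Rightarrow> ('a \<Rightarrow> 'a \<Rightarrow> bool) \<Rightarrow> bool" where
  "nested_nbhds V E \<longleftrightarrow> (\<forall>x\<in>V. \<forall>y\<in>V.
     open_nbhd V E x \<subseteq> closed_nbhd V E y \<or> open_nbhd V E y \<subseteq> closed_nbhd V E x)"

definition induced :: "'a set \<Rightarrow> ('a \<Rightarrow> 'a \<Rightarrow> bool) \<Rightarrow> 'a \<Rightarrow> 'a \<Rightarrow> bool" where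
  "induced W E x y \<longleftrightarrow> E x y \<and> x \<in> W \<and> y \<in> W"

lemma threshold_edges_in: "threshold V E \<Longrightarrow> E x y \<Longrightarrow> x \<in> V \<and> y \<in> V"
  by (induction arbitrary: x y rule: threshold.induct) auto

lemma threshold_imp_nested_nbhds: "threshold V E \<Longrightarrow> nested_nbhds V E"
proof (induction rule: threshold.induct)
  case empty
  show ?case by (simp add: nested_nbhds_def)
next
  case (add_isolated V E v)
  then show ?case using threshold_edges_in[OF add_isolated(1)]
    unfolding nested_nbhds_def open_nbhd_def closed_nbhd_def by auto
next
  case (add_dominating V E v)
  then show ?case using threshold_edges_in[OF add_dominating(1)]
    unfolding nested_nbhds_def open_nbhd_def closed_nbhd_def by auto
qed

lemma simple_graph_induced: "simple_graph V E \<Longrightarrow> W \<subseteq> V \<Longrightarrow> simple_graph W (induced W E)"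
  unfolding simple_graph_def induced_def by (auto intro: finite_subset)

lemma nested_nbhds_induced: "nested_nbhds V E \<Longrightarrow> W \<subseteq> V \<Longrightarrow> nested_nbhds W (induced W E)"
  unfolding nested_nbhds_def open_nbhd_def closed_nbhd_def induced_def by blast

lemma max_degree_closed_nbhd_contains:
  assumes "simple_graph V E" "nested_nbhds V E" "x \<in> V" "u \<in> V"
    and max: "\<forall>y\<in>V. card (open_nbhd V E y) \<le> card (open_nbhd V E u)"
  shows "open_nbhd V E x \<subseteq> closed_nbhd V E u"
proof (rule ccontr)
  assume not_sub: "\<not> open_nbhd V E x \<subseteq> closed_nbhd V E u"
  then obtain z where z: "z \<in> open_nbhd V E x" "z \<notin> closed_nbhd V E u" by blast
  have sub: "open_nbhd V E u \<subseteq> closed_nbhd V E x"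
    using assms(2-4) not_sub unfolding nested_nbhds_def by blast
  have fin: "finite (open_nbhd V E x)"
    using assms(1) unfolding simple_graph_def open_nbhd_def by simp
  \<comment> \<open>N(x) contains N(u) with x traded for u (if x ~ u), plus z: so deg x > deg u\<close>
  define A where "A = insert z (if E u x then insert u (open_nbhd V E u - {x}) else open_nbhd V E u)"
  have "A \<subseteq> open_nbhd V E x"
    using z sub assms(1,3,4) unfolding A_def simple_graph_def open_nbhd_def closed_nbhd_def
    by (auto split: if_splits)
  then have "card A \<le> card (open_nbhd V E x)" by (intro card_mono fin)
  moreover have "card A = Suc (card (open_nbhd V E u))"
  proof -
    have fu: "finite (open_nbhd V E u)"
      using assms(1) unfolding simple_graph_def open_nbhd_def by simp
    have "u \<notin> open_nbhd V E u" "z \<noteq> u" "z \<notin> open_nbhd V E u"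
      using assms(1) z(2) unfolding simple_graph_def open_nbhd_def closed_nbhd_def by auto
    moreover have "E u x \<Longrightarrow> Suc (card (open_nbhd V E u - {x})) = card (open_nbhd V E u)"
      using assms(3) fu by (intro card_Suc_Diff1) (auto simp: open_nbhd_def)
    ultimately show ?thesis unfolding A_def using fu by (auto simp: card_insert_if)
  qed
  ultimately show False using max assms(3) by fastforce
qed

lemma nested_nbhds_isolated_or_dominating:
  assumes "simple_graph V E" "nested_nbhds V E" "V \<noteq> {}"
  obtains v where "v \<in> V" "\<forall>y. \<not> E v y"
    | v where "v \<in> V" "\<forall>y\<in>V. y \<noteq> v \<longrightarrow> E v y"
proof -
  let ?deg = "\<lambda>y. card (open_nbhd V E y)"
  have fin: "finite V" using assms(1) by (simp add: simple_graph_def)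
  then obtain u where u: "u \<in> V" and "Max (?deg ` V) = ?deg u"
    using obtains_MAX assms(3) by blast
  with fin have max: "\<forall>y\<in>V. ?deg y \<le> ?deg u" by (metis Max_ge finite_imageI imageI)
  show thesis
  proof (cases "\<forall>y\<in>V. y \<noteq> u \<longrightarrow> E u y")
    case True
    with u that(2) show thesis by blast
  next
    case False
    then obtain w where w: "w \<in> V" "w \<noteq> u" "\<not> E u w" by blast
    have "\<not> E w x" for x
    proof
      assume "E w x"
      then have "x \<in> V" "w \<in> open_nbhd V E x"
        using assms(1) w(1) unfolding simple_graph_def open_nbhd_def by auto
      with max_degree_closed_nbhd_contains[OF assms(1,2) _ u max] w show False
        by (auto simp: closed_nbhd_def open_nbhd_def)
    qed
    with w(1) that(1) show thesis by blast
  qed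
qed

lemma nested_nbhds_imp_threshold: "simple_graph V E \<Longrightarrow> nested_nbhds V E \<Longrightarrow> threshold V E"
proof (induction "card V" arbitrary: V E rule: less_induct)
  case less
  have fin: "finite V" using less.prems(1) by (simp add: simple_graph_def)
  show ?case
  proof (cases "V = {}")
    case True
    then have "E = (\<lambda>_ _. False)" using less.prems(1) unfolding simple_graph_def by blast
    with True show ?thesis by (simp add: threshold.empty)
  next
    case False
    have IH: "threshold (V - {v}) (induced (V - {v}) E)" if "v \<in> V" for v
      using less.hyps[OF card_Diff1_less[OF fin that]]
        simple_graph_induced[OF less.prems(1)] nested_nbhds_induced[OF less.prems(2)]
      by blast
    have edges: "E x y \<Longrightarrow> x \<in> V \<and> y \<in> V" for x y
      using less.prems(1) by (simp add: simple_graph_def)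
    from nested_nbhds_isolated_or_dominating[OF less.prems False] show ?thesis
    proof cases
      case (1 v)
      have "induced (V - {v}) E = E"
        using 1 edges less.prems(1) unfolding induced_def simple_graph_def by (intro ext) blast
      with IH[OF 1(1)] threshold.add_isolated[of "V - {v}" E v] 1(1) show ?thesis
        by (simp add: insert_absorb)
    next
      case (2 v)
      have "(\<lambda>x y. induced (V - {v}) E x y \<or> (x = v \<and> y \<in> V - {v}) \<or> (y = v \<and> x \<in> V - {v})) = E"
        using 2 edges less.prems(1) unfolding induced_def simple_graph_def by (intro ext) blast
      with threshold.add_dominating[OF IH[OF 2(1)], of v] 2(1) show ?thesis
        by (simp add: insert_absorb)
    qed
  qed
qed

lemma threshold_iff_nested_nbhds: "simple_graph V E \<Longrightarrow> threshold V E \<longleftrightarrow> nested_nbhds V E"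
  using threshold_imp_nested_nbhds nested_nbhds_imp_threshold by blast

lemma I_set_iff: "a \<in> I_set V E C u \<longleftrightarrow> a \<in> C \<and> (a = u \<or> a \<in> V \<and> E u a)"
  unfolding I_set_def closed_nbhd_def open_nbhd_def by blast

lemma is_DLD_code_Diff_edge_end:
  assumes "simple_graph V E" "E x y"
  shows "is_DLD_code V E (V - {x})"
proof -
  have "x \<in> V" "y \<in> V" "y \<noteq> x" using assms unfolding simple_graph_def by metis+
  moreover from this have "y \<in> I_set V E (V - {x}) x" using assms(2) by (simp add: I_set_iff)
  ultimately show ?thesis unfolding is_DLD_code_def by auto
qed

lemma is_DLD_code_Diff_incomparable:
  assumes "simple_graph V E" "u \<in> V" "v \<in> V"
    and "\<not> open_nbhd V E u \<subseteq> closed_nbhd V E v" "\<not> open_nbhd V E v \<subseteq> closed_nbhd V E u"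
  shows "is_DLD_code V E (V - {u, v})"
proof -
  obtain a where a: "a \<in> V" "E u a" "a \<noteq> v" "\<not> E v a"
    using assms(4) unfolding open_nbhd_def closed_nbhd_def by blast
  obtain b where b: "b \<in> V" "E v b" "b \<noteq> u" "\<not> E u b"
    using assms(5) unfolding open_nbhd_def closed_nbhd_def by blast
  have "a \<noteq> u" "b \<noteq> v" using a(2) b(2) assms(1) unfolding simple_graph_def by metis+
  with a b have "a \<in> I_set V E (V - {u, v}) u" "a \<notin> I_set V E (V - {u, v}) v"
    "b \<in> I_set V E (V - {u, v}) v" "b \<notin> I_set V E (V - {u, v}) u"
    unfolding I_set_iff by auto
  with a(1) \<open>a \<noteq> u\<close> \<open>a \<noteq> v\<close> show ?thesis
    unfolding is_DLD_code_def by (auto simp: Diff_Diff_Int)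
qed

lemma DLD_code_outside_incomparable:
  assumes "is_DLD_code V E C" "u \<in> V - C" "v \<in> V - C" "u \<noteq> v"
  shows "\<not> open_nbhd V E u \<subseteq> closed_nbhd V E v"
proof -
  obtain a where "a \<in> I_set V E C u" "a \<notin> I_set V E C v"
    using assms unfolding is_DLD_code_def by blast
  moreover have "a \<noteq> u" using \<open>a \<in> I_set V E C u\<close> assms(2) by (auto simp: I_set_iff)
  ultimately show ?thesis
    unfolding I_set_iff open_nbhd_def closed_nbhd_def by blast
qed

lemma finite_DLD_code_cards: "finite V \<Longrightarrow> finite {card C | C. is_DLD_code V E C}"
  by (rule finite_subset[of _ "card ` Pow V"]) (auto simp: is_DLD_code_def)

lemma gamma_DLD_le: "finite V \<Longrightarrow> is_DLD_code V E C \<Longrightarrow> gamma_DLD V E \<le> card C"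
  unfolding gamma_DLD_def by (rule Min_le) (auto intro: finite_DLD_code_cards)

lemma gamma_DLD_attained:
  assumes "finite V" "is_DLD_code V E C"
  obtains D where "is_DLD_code V E D" "card D = gamma_DLD V E"
proof -
  have "gamma_DLD V E \<in> {card C | C. is_DLD_code V E C}"
    unfolding gamma_DLD_def using assms by (intro Min_in finite_DLD_code_cards) auto
  with that show thesis by auto
qed

lemma nested_nbhds_DLD_code_card:
  assumes "simple_graph V E" "nested_nbhds V E" "is_DLD_code V E C"
  shows "card V - 1 \<le> card C"
proof -
  have fin: "finite V" and CV: "C \<subseteq> V"
    using assms(1,3) by (auto simp: simple_graph_def is_DLD_code_def)
  have "\<forall>u\<in>V - C. \<forall>v\<in>V - C. u = v"
    using DLD_code_outside_incomparable[OF assms(3)] assms(2)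
    unfolding nested_nbhds_def by blast
  then have "card (V - C) \<le> 1" using fin by (simp add: card_le_Suc0_iff_eq)
  with card_Diff_subset[OF finite_subset[OF CV fin] CV] show ?thesis by linarith
qed

lemma gamma_DLD_eq_iff_nested_nbhds:
  assumes "simple_graph V E" "E x y"
  shows "gamma_DLD V E = card V - 1 \<longleftrightarrow> nested_nbhds V E"
proof -
  have fin: "finite V" and xV: "x \<in> V" using assms unfolding simple_graph_def by blast+
  have code: "is_DLD_code V E (V - {x})" by (rule is_DLD_code_Diff_edge_end[OF assms])
  show ?thesis
  proof
    assume gamma: "gamma_DLD V E = card V - 1"
    show "nested_nbhds V E"
      unfolding nested_nbhds_def
    proof (intro ballI, rule ccontr)
      fix u v assume uv: "u \<in> V" "v \<in> V"
        and incomparable: "\<not> (open_nbhd V E u \<subseteq> closed_nbhd V E v \<or>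
                               open_nbhd V E v \<subseteq> closed_nbhd V E u)"
      then have "u \<noteq> v" by (auto simp: closed_nbhd_def)
      have "gamma_DLD V E \<le> card (V - {u, v})"
        using incomparable is_DLD_code_Diff_incomparable[OF assms(1) uv]
        by (intro gamma_DLD_le fin) auto
      also have "\<dots> = card V - 2" using uv \<open>u \<noteq> v\<close> fin by simp
      finally show False
        using gamma card_mono[OF fin, of "{u, v}"] uv \<open>u \<noteq> v\<close> by simp
    qed
  next
    assume "nested_nbhds V E"
    obtain D where "is_DLD_code V E D" "card D = gamma_DLD V E"
      using gamma_DLD_attained[OF fin code] .
    with nested_nbhds_DLD_code_card[OF assms(1) \<open>nested_nbhds V E\<close>]
      gamma_DLD_le[OF fin code] xV fin
    show "gamma_DLD V E = card V - 1" by force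
  qed
qed

theorem mainTheorem7:
  fixes V :: "'a set" and E :: "'a \<Rightarrow> 'a \<Rightarrow> bool"
  assumes "simple_graph V E"
    and "\<exists>x y. E x y"
  shows "gamma_DLD V E = card V - 1 \<longleftrightarrow> threshold V E"
proof -
  obtain x y where "E x y" using assms(2) by blast
  then show ?thesis
    using gamma_DLD_eq_iff_nested_nbhds[OF assms(1)] threshold_iff_nested_nbhds[OF assms(1)]
    by blast
qed

end
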